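(* Let $\{I_x\}_{x\in(0,1]}$ be a family of nonempty half-open intervals of the form $I_x=(y_x,x]\subset(0,1]$ (so $0\le y_x<x$). Then there exists a set $C\subset(0,1]$ such that $\bigcup_{x\in C}I_x=(0,1]$ and the intervals $I_y$, $I_z$ are disjoint whenever $y,z\in C$, $y\ne z$. *)

theory Defs
  imports Complex_Main
begin

end

theory Submission
  imports Defs "HOL-Library.Disjoint_Sets"
begin

text \<open>
  By Zorn's lemma there is a maximal set \<open>C\<close> of pairwise disjoint intervals whose union is a
  final segment \<open>(t, b]\<close>: a union along a chain is again of this form, with \<open>t\<close> the infimum of
  the left endpoints. If \<open>t > a\<close>, no interval of \<open>C\<close> reaches below \<open>t\<close>, so \<open>I\<^sub>t = (y t, t]\<close>
  can be added to \<open>C\<close>, contradicting maximality. Hence \<open>t = a\<close>.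
\<close>

lemma disjoint_family_on_chain_Union:
  assumes "chain\<^sub>\<subseteq> S" and "\<And>C. C \<in> S \<Longrightarrow> disjoint_family_on f C"
  shows "disjoint_family_on f (\<Union>S)"
  unfolding disjoint_family_on_def
proof (intro ballI impI)
  fix m n assume "m \<in> \<Union>S" "n \<in> \<Union>S" "m \<noteq> n"
  then obtain C D where "C \<in> S" "D \<in> S" "m \<in> C" "n \<in> D" by blast
  with \<open>chain\<^sub>\<subseteq> S\<close> obtain E where "E \<in> S" "m \<in> E" "n \<in> E"
    unfolding chain_subset_def by blast
  with assms(2) \<open>m \<noteq> n\<close> show "f m \<inter> f n = {}"
    unfolding disjoint_family_on_def by blast
qed

lemma UN_greaterThanAtMost_eq_Inf:
  fixes T :: "'a::conditionally_complete_linorder set"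
  assumes "T \<noteq> {}" and "bdd_below T"
  shows "(\<Union>s\<in>T. {s<..b}) = {Inf T<..b}"
  using cInf_less_iff[OF assms] by auto

definition tiles_final_segment :: "('a::linorder \<Rightarrow> 'a) \<Rightarrow> 'a set \<Rightarrow> 'a \<Rightarrow> 'a \<Rightarrow> bool" where
  "tiles_final_segment y C t b \<longleftrightarrow>
     disjoint_family_on (\<lambda>x. {y x<..x}) C \<and> (\<Union>x\<in>C. {y x<..x}) = {t<..b}"

lemma tiles_final_segment_chain_Union:
  fixes y :: "'a::conditionally_complete_linorder \<Rightarrow> 'a"
  assumes "chain\<^sub>\<subseteq> S" and "S \<noteq> {}"
    and tiles: "\<And>C. C \<in> S \<Longrightarrow> \<exists>t\<in>{a..b}. tiles_final_segment y C t b"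
  shows "\<exists>t\<in>{a..b}. tiles_final_segment y (\<Union>S) t b"
proof -
  obtain t where t: "\<And>C. C \<in> S \<Longrightarrow> t C \<in> {a..b} \<and> tiles_final_segment y C (t C) b"
    using tiles by metis
  have "t ` S \<noteq> {}" and "bdd_below (t ` S)"
    using \<open>S \<noteq> {}\<close> t by (auto intro!: bdd_belowI[of _ a])
  have "(\<Union>x\<in>\<Union>S. {y x<..x}) = (\<Union>C\<in>S. {t C<..b})"
    using t by (auto simp: tiles_final_segment_def)
  also have "\<dots> = {Inf (t ` S)<..b}"
    using UN_greaterThanAtMost_eq_Inf[OF \<open>t ` S \<noteq> {}\<close> \<open>bdd_below (t ` S)\<close>] by simp
  finally have "tiles_final_segment y (\<Union>S) (Inf (t ` S)) b"
    using disjoint_family_on_chain_Union[OF \<open>chain\<^sub>\<subseteq> S\<close>, of "\<lambda>x. {y x<..x}"] t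
    by (simp add: tiles_final_segment_def)
  moreover have "Inf (t ` S) \<in> {a..b}"
    using \<open>S \<noteq> {}\<close> t \<open>bdd_below (t ` S)\<close>
    by (auto intro: cInf_greatest cInf_lower2 simp: image_iff)
  ultimately show ?thesis by blast
qed

lemma tiles_final_segment_insert:
  fixes y :: "'a::linorder \<Rightarrow> 'a"
  assumes tiles: "tiles_final_segment y C t b"
    and "t \<le> b" and "y t < t" and below: "\<And>c. c \<in> C \<Longrightarrow> y c < c"
  shows "t \<notin> C" and "tiles_final_segment y (insert t C) (y t) b"
proof -
  have union: "(\<Union>x\<in>C. {y x<..x}) = {t<..b}"
    using tiles by (simp add: tiles_final_segment_def)
  have above: "t \<le> y c" if "c \<in> C" for c
  proof (rule ccontr)
    assume "\<not> t \<le> y c"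
    then have "min c t \<in> (\<Union>x\<in>C. {y x<..x})"
      using that below[OF that] by auto
    with union show False by auto
  qed
  show "t \<notin> C"
    using above \<open>y t < t\<close> by fastforce
  have "{y t<..t} \<inter> {y c<..c} = {}" if "c \<in> C" for c
    using above[OF that] by auto
  then have "disjoint_family_on (\<lambda>x. {y x<..x}) (insert t C)"
    using tiles \<open>t \<notin> C\<close> by (auto simp: tiles_final_segment_def disjoint_family_on_insert)
  moreover have "(\<Union>x\<in>insert t C. {y x<..x}) = {y t<..b}"
    using union \<open>t \<le> b\<close> \<open>y t < t\<close> by auto
  ultimately show "tiles_final_segment y (insert t C) (y t) b"
    by (simp add: tiles_final_segment_def)
qed

theorem exists_disjoint_interval_tiling:
  fixes y :: "'a::conditionally_complete_linorder \<Rightarrow> 'a"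
  assumes "a \<le> b" and interval: "\<And>x. x \<in> {a<..b} \<Longrightarrow> a \<le> y x \<and> y x < x"
  shows "\<exists>C \<subseteq> {a<..b}. tiles_final_segment y C a b"
proof -
  define A where "A = {C. C \<subseteq> {a<..b} \<and> (\<exists>t\<in>{a..b}. tiles_final_segment y C t b)}"
  have "\<Union>S \<in> A" if "S \<in> chains A" for S
  proof (cases "S = {}")
    case True
    then show ?thesis
      using \<open>a \<le> b\<close>
      by (auto simp: A_def tiles_final_segment_def disjoint_family_on_def intro!: bexI[of _ b])
  next
    case False
    with that show ?thesis
      using tiles_final_segment_chain_Union[of S a b y] by (auto simp: A_def chains_def)
  qed
  then obtain M where "M \<in> A" and maximal: "\<And>X. X \<in> A \<Longrightarrow> M \<subseteq> X \<Longrightarrow> X = M"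
    using Zorn_Lemma[of A] by blast
  then obtain t where M: "M \<subseteq> {a<..b}" "t \<in> {a..b}" "tiles_final_segment y M t b"
    by (auto simp: A_def)
  have "t = a"
  proof (rule ccontr)
    assume "t \<noteq> a"
    with M have t: "t \<in> {a<..b}" by auto
    have "y t < t" and "\<And>c. c \<in> M \<Longrightarrow> y c < c"
      using interval[OF t] interval M(1) by auto
    with tiles_final_segment_insert[OF M(3)] t
    have "t \<notin> M" and "tiles_final_segment y (insert t M) (y t) b" by auto
    then have "insert t M \<in> A"
      using M(1) t interval[OF t] by (auto simp: A_def)
    with maximal have "insert t M = M" by blast
    with \<open>t \<notin> M\<close> show False by blast
  qed
  with M show ?thesis by blast
qed

theorem mainTheorem11:
  fixes y :: "real \<Rightarrow> real"
  assumes "\<And>x. x \<in> {0<..1} \<Longrightarrow> 0 \<le> y x \<and> y x < x"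
  shows "\<exists>C. C \<subseteq> {0<..1} \<and> (\<Union>x\<in>C. {y x<..x}) = {0<..1}
            \<and> (\<forall>a\<in>C. \<forall>b\<in>C. a \<noteq> b \<longrightarrow> {y a<..a} \<inter> {y b<..b} = {})"
  using exists_disjoint_interval_tiling[of 0 1 y] assms
  by (auto simp: tiles_final_segment_def disjoint_family_on_def)

end
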